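(* In $\mathsf{HSLat}$, every sub-Heyting semilattice $X$ of a Heyting semilattice $A$ has a centraliser, namely $Z_A(X)=\{a\in A\mid (x\Rightarrow a)=a\text{ and }(a\Rightarrow x)=x\text{ for all }x\in X\}$; hence $\mathsf{HSLat}$ is algebraically cartesian closed. Moreover, if $X$ is a normal subobject of $A$, then $Z_A(X)$ is a normal subobject of $A$.
   Context: A Heyting semilattice is a meet-semilattice with top $1$ and an operation $\Rightarrow$ with $x\wedge y\le z$ iff $x\le y\Rightarrow z$; morphisms preserve $1,\wedge,\Rightarrow$. Subobjects $X,Y\le A$ Huq-commute if there is a morphism $\varphi\colon X\times Y\to A$ with $\varphi(x,1)=x$, $\varphi(1,y)=y$. The centraliser $Z_A(X)$ is the largest subobject of $A$ Huq-commuting with $X$. Normal subobjects of $A$ are kernels, which in $\mathsf{HSLat}$ are exactly the filters (non-empty, $\wedge$-closed, up-closed subsets). A semi-abelian category is algebraically cartesian closed iff centralisers of all subobjects exist. *)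

theory Defs
  imports Main
begin

definition hsl_le :: "('a \<Rightarrow> 'a \<Rightarrow> 'a) \<Rightarrow> 'a \<Rightarrow> 'a \<Rightarrow> bool" where
  "hsl_le m x y \<longleftrightarrow> m x y = x"

definition hsl :: "'a set \<Rightarrow> ('a \<Rightarrow> 'a \<Rightarrow> 'a) \<Rightarrow> ('a \<Rightarrow> 'a \<Rightarrow> 'a) \<Rightarrow> 'a \<Rightarrow> bool" where
  "hsl A m i t \<longleftrightarrow>
     t \<in> A \<and>
     (\<forall>x\<in>A. \<forall>y\<in>A. m x y \<in> A \<and> i x y \<in> A) \<and>
     (\<forall>x\<in>A. \<forall>y\<in>A. \<forall>z\<in>A. m (m x y) z = m x (m y z)) \<and>
     (\<forall>x\<in>A. \<forall>y\<in>A. m x y = m y x) \<and>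
     (\<forall>x\<in>A. m x x = x) \<and>
     (\<forall>x\<in>A. m x t = x) \<and>
     (\<forall>x\<in>A. \<forall>y\<in>A. \<forall>z\<in>A. hsl_le m (m x y) z \<longleftrightarrow> hsl_le m x (i y z))"

definition sub_hsl :: "'a set \<Rightarrow> 'a set \<Rightarrow> ('a \<Rightarrow> 'a \<Rightarrow> 'a) \<Rightarrow> ('a \<Rightarrow> 'a \<Rightarrow> 'a) \<Rightarrow> 'a \<Rightarrow> bool" where
  "sub_hsl X A m i t \<longleftrightarrow> X \<subseteq> A \<and> t \<in> X \<and>
     (\<forall>x\<in>X. \<forall>y\<in>X. m x y \<in> X \<and> i x y \<in> X)"

text \<open>Huq-commutation: a morphism phi : X \<times> Y \<rightarrow> A (componentwise structure on the
  product) with phi(x,1) = x and phi(1,y) = y.\<close>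
definition huq_commute :: "'a set \<Rightarrow> ('a \<Rightarrow> 'a \<Rightarrow> 'a) \<Rightarrow> ('a \<Rightarrow> 'a \<Rightarrow> 'a) \<Rightarrow> 'a \<Rightarrow> 'a set \<Rightarrow> 'a set \<Rightarrow> bool" where
  "huq_commute A m i t X Y \<longleftrightarrow>
     (\<exists>\<phi> :: 'a \<times> 'a \<Rightarrow> 'a.
        (\<forall>x\<in>X. \<forall>y\<in>Y. \<phi> (x, y) \<in> A) \<and>
        \<phi> (t, t) = t \<and>
        (\<forall>x\<in>X. \<forall>y\<in>Y. \<forall>x'\<in>X. \<forall>y'\<in>Y.
            \<phi> (m x x', m y y') = m (\<phi> (x, y)) (\<phi> (x', y')) \<and>
            \<phi> (i x x', i y y') = i (\<phi> (x, y)) (\<phi> (x', y'))) \<and>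
        (\<forall>x\<in>X. \<phi> (x, t) = x) \<and>
        (\<forall>y\<in>Y. \<phi> (t, y) = y))"

definition is_centraliser :: "'a set \<Rightarrow> ('a \<Rightarrow> 'a \<Rightarrow> 'a) \<Rightarrow> ('a \<Rightarrow> 'a \<Rightarrow> 'a) \<Rightarrow> 'a \<Rightarrow> 'a set \<Rightarrow> 'a set \<Rightarrow> bool" where
  "is_centraliser A m i t X Z \<longleftrightarrow>
     sub_hsl Z A m i t \<and> huq_commute A m i t X Z \<and>
     (\<forall>Y. sub_hsl Y A m i t \<and> huq_commute A m i t X Y \<longrightarrow> Y \<subseteq> Z)"

text \<open>Normal subobjects = kernels = filters.\<close>
definition hsl_filter :: "'a set \<Rightarrow> 'a set \<Rightarrow> ('a \<Rightarrow> 'a \<Rightarrow> 'a) \<Rightarrow> bool" where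
  "hsl_filter F A m \<longleftrightarrow> F \<subseteq> A \<and> F \<noteq> {} \<and>
     (\<forall>x\<in>F. \<forall>y\<in>F. m x y \<in> F) \<and>
     (\<forall>x\<in>F. \<forall>y\<in>A. hsl_le m x y \<longrightarrow> y \<in> F)"

definition centraliser_set :: "'a set \<Rightarrow> ('a \<Rightarrow> 'a \<Rightarrow> 'a) \<Rightarrow> 'a set \<Rightarrow> 'a set" where
  "centraliser_set A i X = {a \<in> A. \<forall>x\<in>X. i x a = a \<and> i a x = x}"

end

theory Submission
  imports Defs
begin

text \<open>For \<open>x \<in> X\<close> and \<open>a \<in> A\<close>, the conditions \<open>x \<Rightarrow> a = a\<close> and \<open>a \<Rightarrow> x = x\<close> say that
  implications between \<open>x\<close> and \<open>a\<close> are trivial. They make the meet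
  \<open>\<phi>(x, y) = x \<and> y\<close> a morphism \<open>X \<times> Z \<rightarrow> A\<close>: by currying, \<open>(x \<and> y) \<Rightarrow> (x' \<and> y')\<close>
  splits as \<open>(y \<Rightarrow> (x \<Rightarrow> x')) \<and> (x \<Rightarrow> (y \<Rightarrow> y'))\<close>, and the outer implications are
  trivial because \<open>x \<Rightarrow> x' \<in> X\<close> and \<open>y \<Rightarrow> y' \<in> Z\<close>. Conversely, any \<open>\<phi>\<close> witnessing
  that \<open>X\<close> and \<open>Y\<close> Huq-commute forces \<open>x \<Rightarrow> y = \<phi>(x \<Rightarrow> 1, 1 \<Rightarrow> y) = \<phi>(1, y) = y\<close>, and
  symmetrically \<open>y \<Rightarrow> x = x\<close>, so \<open>Y \<subseteq> Z\<close>. If \<open>X\<close> is a filter, \<open>Z\<close> is upward closed: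
  for \<open>a \<le> b\<close> with \<open>a \<in> Z\<close>, the element \<open>(x \<Rightarrow> b) \<Rightarrow> b\<close> lies above \<open>x\<close>, hence in \<open>X\<close>,
  and it lies above \<open>a\<close>, hence equals \<open>1\<close>.\<close>

locale heyting_semilattice =
  fixes A :: "'a set" and m i :: "'a \<Rightarrow> 'a \<Rightarrow> 'a" and t :: 'a
  assumes hsl: "hsl A m i t"
begin

abbreviation le (infix "\<sqsubseteq>" 50) where "x \<sqsubseteq> y \<equiv> hsl_le m x y"

lemma top_closed [simp]: "t \<in> A"
  using hsl unfolding hsl_def by blast

lemma meet_closed [simp]: "x \<in> A \<Longrightarrow> y \<in> A \<Longrightarrow> m x y \<in> A"
  using hsl unfolding hsl_def by blast

lemma imp_closed [simp]: "x \<in> A \<Longrightarrow> y \<in> A \<Longrightarrow> i x y \<in> A"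
  using hsl unfolding hsl_def by blast

lemma meet_assoc: "x \<in> A \<Longrightarrow> y \<in> A \<Longrightarrow> z \<in> A \<Longrightarrow> m (m x y) z = m x (m y z)"
  using hsl unfolding hsl_def by blast

lemma meet_comm: "x \<in> A \<Longrightarrow> y \<in> A \<Longrightarrow> m x y = m y x"
  using hsl unfolding hsl_def by blast

lemma meet_idem [simp]: "x \<in> A \<Longrightarrow> m x x = x"
  using hsl unfolding hsl_def by blast

lemma meet_top [simp]: "x \<in> A \<Longrightarrow> m x t = x"
  using hsl unfolding hsl_def by blast

lemma top_meet [simp]: "x \<in> A \<Longrightarrow> m t x = x"
  using meet_comm meet_top top_closed by metis

lemma residuation: "x \<in> A \<Longrightarrow> y \<in> A \<Longrightarrow> z \<in> A \<Longrightarrow> m x y \<sqsubseteq> z \<longleftrightarrow> x \<sqsubseteq> i y z"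
  using hsl unfolding hsl_def by blast

lemma hsl_le_refl: "x \<in> A \<Longrightarrow> x \<sqsubseteq> x"
  by (simp add: hsl_le_def)

lemma hsl_le_antisym: "x \<in> A \<Longrightarrow> y \<in> A \<Longrightarrow> x \<sqsubseteq> y \<Longrightarrow> y \<sqsubseteq> x \<Longrightarrow> x = y"
  by (metis hsl_le_def meet_comm)

lemma hsl_le_trans: "x \<in> A \<Longrightarrow> y \<in> A \<Longrightarrow> z \<in> A \<Longrightarrow> x \<sqsubseteq> y \<Longrightarrow> y \<sqsubseteq> z \<Longrightarrow> x \<sqsubseteq> z"
  by (metis hsl_le_def meet_assoc)

lemma meet_le1: "x \<in> A \<Longrightarrow> y \<in> A \<Longrightarrow> m x y \<sqsubseteq> x"
  by (metis hsl_le_def meet_assoc meet_comm meet_idem)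

lemma meet_le2: "x \<in> A \<Longrightarrow> y \<in> A \<Longrightarrow> m x y \<sqsubseteq> y"
  by (metis meet_le1 meet_comm)

lemma le_meet_iff: "x \<in> A \<Longrightarrow> y \<in> A \<Longrightarrow> z \<in> A \<Longrightarrow> z \<sqsubseteq> m x y \<longleftrightarrow> z \<sqsubseteq> x \<and> z \<sqsubseteq> y"
  by (metis hsl_le_def meet_assoc meet_closed meet_le1 meet_le2 hsl_le_trans)

lemma meet_mono: "a \<in> A \<Longrightarrow> b \<in> A \<Longrightarrow> c \<in> A \<Longrightarrow> a \<sqsubseteq> b \<Longrightarrow> m a c \<sqsubseteq> m b c"
  by (meson le_meet_iff meet_le1 meet_le2 hsl_le_trans meet_closed)

lemma le_top: "x \<in> A \<Longrightarrow> x \<sqsubseteq> t"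
  by (simp add: hsl_le_def)

lemma eq_if_same_lower_bounds:
  "p \<in> A \<Longrightarrow> q \<in> A \<Longrightarrow> (\<And>w. w \<in> A \<Longrightarrow> w \<sqsubseteq> p \<longleftrightarrow> w \<sqsubseteq> q) \<Longrightarrow> p = q"
  by (metis hsl_le_antisym hsl_le_refl)

lemma modus_ponens: "x \<in> A \<Longrightarrow> y \<in> A \<Longrightarrow> m (i x y) x \<sqsubseteq> y"
  using residuation hsl_le_refl imp_closed by blast

lemma imp_eq_top_iff: "x \<in> A \<Longrightarrow> y \<in> A \<Longrightarrow> i x y = t \<longleftrightarrow> x \<sqsubseteq> y"
  by (metis residuation hsl_le_antisym le_top top_meet imp_closed top_closed)

lemma top_imp [simp]: "x \<in> A \<Longrightarrow> i t x = x"
  by (rule eq_if_same_lower_bounds) (auto simp: residuation[symmetric])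

lemma imp_top [simp]: "x \<in> A \<Longrightarrow> i x t = t"
  using imp_eq_top_iff le_top top_closed by blast

lemma le_imp: "x \<in> A \<Longrightarrow> y \<in> A \<Longrightarrow> y \<sqsubseteq> i x y"
  using meet_le1 residuation by blast

lemma le_imp_imp: "x \<in> A \<Longrightarrow> y \<in> A \<Longrightarrow> x \<sqsubseteq> i (i x y) y"
  by (metis modus_ponens residuation meet_comm imp_closed)

lemma imp_meet_left:
  assumes "x \<in> A" "y \<in> A" "z \<in> A"
  shows "i (m x y) z = i x (i y z)"
proof (rule eq_if_same_lower_bounds)
  fix w assume "w \<in> A"
  with assms have "w \<sqsubseteq> i (m x y) z \<longleftrightarrow> m (m w x) y \<sqsubseteq> z"
    by (simp add: residuation[symmetric] meet_assoc)
  also have "\<dots> \<longleftrightarrow> w \<sqsubseteq> i x (i y z)"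
    using assms \<open>w \<in> A\<close> by (simp add: residuation)
  finally show "w \<sqsubseteq> i (m x y) z \<longleftrightarrow> w \<sqsubseteq> i x (i y z)" .
qed (use assms in simp_all)

lemma imp_swap: "x \<in> A \<Longrightarrow> y \<in> A \<Longrightarrow> z \<in> A \<Longrightarrow> i x (i y z) = i y (i x z)"
  by (metis imp_meet_left meet_comm)

lemma imp_meet_right:
  assumes "x \<in> A" "a \<in> A" "b \<in> A"
  shows "i x (m a b) = m (i x a) (i x b)"
proof (rule eq_if_same_lower_bounds)
  fix w assume "w \<in> A"
  with assms have "w \<sqsubseteq> i x (m a b) \<longleftrightarrow> m w x \<sqsubseteq> a \<and> m w x \<sqsubseteq> b"
    by (simp add: residuation[symmetric] le_meet_iff)
  also have "\<dots> \<longleftrightarrow> w \<sqsubseteq> m (i x a) (i x b)"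
    using assms \<open>w \<in> A\<close> by (simp add: residuation le_meet_iff)
  finally show "w \<sqsubseteq> i x (m a b) \<longleftrightarrow> w \<sqsubseteq> m (i x a) (i x b)" .
qed (use assms in simp_all)

lemma imp_antitone:
  assumes "a \<in> A" "b \<in> A" "x \<in> A" "a \<sqsubseteq> b"
  shows "i b x \<sqsubseteq> i a x"
proof -
  have "m (i b x) a \<sqsubseteq> m (i b x) b"
    using assms meet_mono meet_comm by (metis imp_closed)
  moreover have "m (i b x) b \<sqsubseteq> x"
    using assms modus_ponens by blast
  ultimately have "m (i b x) a \<sqsubseteq> x"
    using assms hsl_le_trans by (meson imp_closed meet_closed)
  then show ?thesis
    using assms residuation by simp
qed

lemma imp_fixed_upward:
  assumes "c \<in> A" "d \<in> A" "x \<in> A" "c \<sqsubseteq> d" "i c x = x"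
  shows "i d x = x"
  using assms imp_antitone[of c d x] le_imp[of d x] hsl_le_antisym by simp

lemma centraliser_set_sub_hsl:
  assumes "X \<subseteq> A"
  shows "sub_hsl (centraliser_set A i X) A m i t"
proof -
  have "m a b \<in> centraliser_set A i X \<and> i a b \<in> centraliser_set A i X"
    if "a \<in> centraliser_set A i X" "b \<in> centraliser_set A i X" for a b
  proof -
    have a: "a \<in> A" "\<And>x. x \<in> X \<Longrightarrow> i x a = a \<and> i a x = x"
      and b: "b \<in> A" "\<And>x. x \<in> X \<Longrightarrow> i x b = b \<and> i b x = x"
      using that unfolding centraliser_set_def by auto
    have "i x (i a b) = i a b" if "x \<in> X" for x
      using imp_swap[of x a b] a b \<open>x \<in> X\<close> assms by auto
    moreover have "i (i a b) x = x" if "x \<in> X" for x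
      using imp_fixed_upward[of b "i a b" x] le_imp[of a b] a b \<open>x \<in> X\<close> assms by auto
    ultimately show ?thesis
      using a b assms unfolding centraliser_set_def by (auto simp: imp_meet_right imp_meet_left)
  qed
  with assms show ?thesis
    unfolding sub_hsl_def centraliser_set_def by auto
qed

lemma huq_commute_centraliser_set:
  assumes X: "sub_hsl X A m i t"
  shows "huq_commute A m i t X (centraliser_set A i X)"
proof -
  let ?Z = "centraliser_set A i X"
  have XA: "X \<subseteq> A" and imp_X: "\<And>x x'. x \<in> X \<Longrightarrow> x' \<in> X \<Longrightarrow> i x x' \<in> X"
    using X unfolding sub_hsl_def by auto
  have ZA: "?Z \<subseteq> A" and imp_Z: "\<And>y y'. y \<in> ?Z \<Longrightarrow> y' \<in> ?Z \<Longrightarrow> i y y' \<in> ?Z"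
    using centraliser_set_sub_hsl[OF XA] unfolding sub_hsl_def by auto
  have trivial: "i x y = y" "i y x = x" if "x \<in> X" "y \<in> ?Z" for x y
    using that unfolding centraliser_set_def by auto
  have meet_hom: "m (m x x') (m y y') = m (m x y) (m x' y')"
    if "x \<in> A" "x' \<in> A" "y \<in> A" "y' \<in> A" for x x' y y'
    using that by (metis meet_assoc meet_comm meet_closed)
  have imp_hom: "m (i x x') (i y y') = i (m x y) (m x' y')"
    if "x \<in> X" "x' \<in> X" "y \<in> ?Z" "y' \<in> ?Z" for x x' y y'
  proof -
    have A: "x \<in> A" "x' \<in> A" "y \<in> A" "y' \<in> A"
      using that XA ZA by auto
    then have "i (m x y) x' = i y (i x x')"
      by (metis imp_meet_left meet_comm)
    with A have "i (m x y) (m x' y') = m (i y (i x x')) (i x (i y y'))"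
      by (simp add: imp_meet_right imp_meet_left)
    also have "\<dots> = m (i x x') (i y y')"
      using that imp_X imp_Z trivial by simp
    finally show ?thesis by simp
  qed
  have "\<And>x. x \<in> X \<Longrightarrow> x \<in> A" "\<And>y. y \<in> ?Z \<Longrightarrow> y \<in> A"
    using XA ZA by auto
  then show ?thesis
    unfolding huq_commute_def
    by (intro exI[of _ "\<lambda>(x, y). m x y"]) (auto simp: meet_hom imp_hom)
qed

lemma subset_centraliser_set_if_huq_commute:
  assumes X: "sub_hsl X A m i t" and Y: "sub_hsl Y A m i t"
    and huq: "huq_commute A m i t X Y"
  shows "Y \<subseteq> centraliser_set A i X"
proof
  fix y assume "y \<in> Y"
  obtain \<phi> where
    imp_hom: "\<forall>x\<in>X. \<forall>y\<in>Y. \<forall>x'\<in>X. \<forall>y'\<in>Y. \<phi> (i x x', i y y') = i (\<phi> (x, y)) (\<phi> (x', y'))"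
    and left: "\<forall>x\<in>X. \<phi> (x, t) = x" and right: "\<forall>y\<in>Y. \<phi> (t, y) = y"
    using huq unfolding huq_commute_def by blast
  have XA: "X \<subseteq> A" "t \<in> X" and YA: "Y \<subseteq> A" "t \<in> Y"
    using X Y unfolding sub_hsl_def by auto
  have "i x y = y \<and> i y x = x" if "x \<in> X" for x
  proof
    have "x \<in> A" "y \<in> A"
      using \<open>x \<in> X\<close> \<open>y \<in> Y\<close> XA YA by auto
    have "\<phi> (i x t, i t y) = i (\<phi> (x, t)) (\<phi> (t, y))"
      using imp_hom \<open>x \<in> X\<close> \<open>y \<in> Y\<close> XA YA by blast
    then show "i x y = y"
      using left right \<open>x \<in> X\<close> \<open>y \<in> Y\<close> \<open>x \<in> A\<close> \<open>y \<in> A\<close> XA YA by simp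
    have "\<phi> (i t x, i y t) = i (\<phi> (t, y)) (\<phi> (x, t))"
      using imp_hom \<open>x \<in> X\<close> \<open>y \<in> Y\<close> XA YA by blast
    then show "i y x = x"
      using left right \<open>x \<in> X\<close> \<open>y \<in> Y\<close> \<open>x \<in> A\<close> \<open>y \<in> A\<close> XA YA by simp
  qed
  with \<open>y \<in> Y\<close> YA show "y \<in> centraliser_set A i X"
    unfolding centraliser_set_def by auto
qed

lemma is_centraliser_centraliser_set:
  assumes "sub_hsl X A m i t"
  shows "is_centraliser A m i t X (centraliser_set A i X)"
proof -
  have "X \<subseteq> A"
    using assms unfolding sub_hsl_def by blast
  then show ?thesis
    unfolding is_centraliser_def
    using assms centraliser_set_sub_hsl huq_commute_centraliser_set
      subset_centraliser_set_if_huq_commute by blast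
qed

lemma centraliser_set_upward_closed:
  assumes F: "hsl_filter X A m"
    and a: "a \<in> centraliser_set A i X" and "b \<in> A" "a \<sqsubseteq> b"
  shows "b \<in> centraliser_set A i X"
proof -
  have XA: "X \<subseteq> A" and up: "\<And>x y. x \<in> X \<Longrightarrow> y \<in> A \<Longrightarrow> x \<sqsubseteq> y \<Longrightarrow> y \<in> X"
    using F unfolding hsl_filter_def by auto
  have "a \<in> A" and trivial_a: "\<And>x. x \<in> X \<Longrightarrow> i x a = a \<and> i a x = x"
    using a unfolding centraliser_set_def by auto
  have "i x b = b \<and> i b x = x" if "x \<in> X" for x
  proof
    have "x \<in> A" using \<open>x \<in> X\<close> XA by auto
    then show "i b x = x"
      using imp_fixed_upward[of a b x] trivial_a \<open>x \<in> X\<close> \<open>a \<in> A\<close> \<open>b \<in> A\<close> \<open>a \<sqsubseteq> b\<close> by blast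
    let ?c = "i x b"
    have "i ?c b \<in> X"
      using up \<open>x \<in> X\<close> \<open>x \<in> A\<close> \<open>b \<in> A\<close> le_imp_imp by simp
    then have "i a (i ?c b) = i ?c b"
      using trivial_a by blast
    moreover have "a \<sqsubseteq> i ?c b"
      using hsl_le_trans le_imp \<open>a \<in> A\<close> \<open>b \<in> A\<close> \<open>x \<in> A\<close> \<open>a \<sqsubseteq> b\<close> by (meson imp_closed)
    ultimately have "?c \<sqsubseteq> b"
      using imp_eq_top_iff \<open>a \<in> A\<close> \<open>b \<in> A\<close> \<open>x \<in> A\<close> by (metis imp_closed)
    then show "?c = b"
      using hsl_le_antisym le_imp \<open>b \<in> A\<close> \<open>x \<in> A\<close> by (meson imp_closed)
  qed
  with \<open>b \<in> A\<close> show ?thesis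
    unfolding centraliser_set_def by auto
qed

lemma hsl_filter_centraliser_set:
  assumes "hsl_filter X A m"
  shows "hsl_filter (centraliser_set A i X) A m"
proof -
  have "sub_hsl (centraliser_set A i X) A m i t"
    using assms centraliser_set_sub_hsl unfolding hsl_filter_def by blast
  with assms centraliser_set_upward_closed show ?thesis
    unfolding hsl_filter_def sub_hsl_def by blast
qed

end

theorem mainTheorem18:
  assumes "hsl A m i t"
  shows "(\<forall>X. sub_hsl X A m i t \<longrightarrow>
            is_centraliser A m i t X (centraliser_set A i X) \<and>
            (hsl_filter X A m \<longrightarrow> hsl_filter (centraliser_set A i X) A m))"
proof -
  interpret heyting_semilattice A m i t
    using assms by unfold_locales
  show ?thesis
    by (simp add: is_centraliser_centraliser_set hsl_filter_centraliser_set)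
qed

end
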